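(* Let $p$ be an odd prime, $G$ a finite group with a Sylow $p$-subgroup $P$, and $H$ a normal subgroup of $G$ such that $G = PH$. Set $Q = P \cap H$. Let $P$ act by conjugation on $N_H(Q)/QC_H(Q)$. Then $C_{N_H(Q)/QC_H(Q)}(P) = N_H(P)C_H(Q)/QC_H(Q)$, and the inclusion $N_H(P) \subseteq N_G(P)$ induces a well-defined surjective group homomorphism $$C_{N_H(Q)/QC_H(Q)}(P) \to N_G(P)/PC_G(P)$$ (sending the coset of $n \in N_H(P)$ to $nPC_G(P)$) whose kernel is a $p$-group.
   Context: $C_X(P)$ for a group $X$ on which $P$ acts denotes the subgroup of $P$-fixed elements. *)

theory Defs
  imports "HOL-Algebra.Algebra" "HOL-Computational_Algebra.Primes"
begin

definition centralizer :: "('a, 'b) monoid_scheme \<Rightarrow> 'a set \<Rightarrow> 'a set" where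
  "centralizer G A = {g \<in> carrier G. \<forall>a\<in>A. g \<otimes>\<^bsub>G\<^esub> a = a \<otimes>\<^bsub>G\<^esub> g}"

definition sylow_subgroup :: "('a, 'b) monoid_scheme \<Rightarrow> nat \<Rightarrow> 'a set \<Rightarrow> bool" where
  "sylow_subgroup G p P \<longleftrightarrow> subgroup P G \<and> card P = p ^ multiplicity p (card (carrier G))"

definition conj_fixed :: "('a, 'b) monoid_scheme \<Rightarrow> 'a set \<Rightarrow> 'a set set \<Rightarrow> 'a set set" where
  "conj_fixed G P S = {Y \<in> S. \<forall>x\<in>P. r_coset G (l_coset G x Y) (m_inv G x) = Y}"

end

theory Submission
  imports Defs
begin

text \<open>Write \<open>K = Q C\<^sub>H(Q)\<close> and \<open>L = P C\<^sub>G(P)\<close>. A coset \<open>K n\<close> with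
  \<open>n \<in> N\<^sub>H(Q)\<close> is fixed by \<open>P\<close> iff all commutators \<open>x n x\<^sup>-\<^sup>1 n\<^sup>-\<^sup>1\<close> with
  \<open>x \<in> P\<close> lie in \<open>K\<close>. Then \<open>n P n\<^sup>-\<^sup>1 \<subseteq> P K\<close>, so by Sylow's theorem in \<open>P K\<close> it is
  conjugate to \<open>P\<close> by some \<open>k \<in> K\<close> (a Frattini argument), and \<open>k n \<in> N\<^sub>H(P)\<close>
  represents the same coset. Hence the fixed points are exactly the cosets of
  \<open>N\<^sub>H(P)\<close>, and \<open>K n \<mapsto> L n\<close> is onto \<open>N\<^sub>G(P)/L\<close> because \<open>G = P H\<close>.

  The map is well defined because \<open>K \<inter> N\<^sub>G(P) \<subseteq> L\<close>. An element \<open>c \<in> C\<^sub>H(Q)\<close>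
  normalizing \<open>P\<close> acts on \<open>P\<close> by \<open>x \<mapsto> x z\<close> with \<open>z \<in> Q\<close> centralized by \<open>c\<close>,
  so \<open>c\<^bsup>|P|\<^esup>\<close> centralizes \<open>P\<close>; writing \<open>c = y w\<close> with \<open>y\<close> its \<open>p\<close>-part and
  \<open>w\<close> a power of \<open>c\<^bsup>|P|\<^esup>\<close>, the \<open>p\<close>-element \<open>y\<close> lies in the normal Sylow subgroup
  \<open>P\<close> of \<open>N\<^sub>G(P)\<close>. Finally, if \<open>L n = L\<close> then \<open>n = x c\<close> with \<open>x \<in> P\<close> and
  \<open>c \<in> C\<^sub>G(P)\<close>, so \<open>n\<^bsup>|P|\<^esup> = c\<^bsup>|P|\<^esup> \<in> C\<^sub>H(Q) \<subseteq> K\<close>: the kernel has exponent dividing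
  \<open>|P|\<close> and is a \<open>p\<close>-group.\<close>

context group
begin

lemma inv_mult_cancel_left [simp]:
  "x \<in> carrier G \<Longrightarrow> y \<in> carrier G \<Longrightarrow> inv x \<otimes> (x \<otimes> y) = y"
  by (simp add: m_assoc[symmetric])

lemma mult_inv_cancel_left [simp]:
  "x \<in> carrier G \<Longrightarrow> y \<in> carrier G \<Longrightarrow> x \<otimes> (inv x \<otimes> y) = y"
  by (simp add: m_assoc[symmetric])

lemma rcos_eq_iff:
  assumes "subgroup S G" "a \<in> carrier G" "b \<in> carrier G"
  shows "S #> a = S #> b \<longleftrightarrow> a \<otimes> inv b \<in> S"
proof
  assume "S #> a = S #> b"
  then have "a \<in> S #> b" using rcos_self[OF assms(2,1)] by simp
  then show "a \<otimes> inv b \<in> S" using subgroup.rcos_module_imp[OF assms(1) is_group assms(3)] by simp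
next
  assume "a \<otimes> inv b \<in> S"
  then have "a \<in> S #> b" using subgroup.rcos_module_rev[OF assms(1) is_group assms(3,2)] by simp
  then show "S #> a = S #> b" using repr_independence[OF _ assms(3,1)] by simp
qed

lemma rcos_mult_in_subgroup:
  assumes "N \<lhd> G\<lparr>carrier := S\<rparr>" "a \<in> S" "b \<in> S"
  shows "(N #> a) <#> (N #> b) = N #> (a \<otimes> b)"
  using normal.rcos_sum[OF assms(1), of a b] assms(2,3) by simp

lemma subgroup_nat_pow_closed:
  assumes "subgroup S G" "x \<in> S"
  shows "x [^] (n::nat) \<in> S"
  using subgroup_int_pow_closed[OF assms, of "int n"] by (simp add: int_pow_int)

lemma subgroup_pow_card_eq_one:
  assumes "subgroup S G" "finite S" "x \<in> S"
  shows "x [^] card S = \<one>"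
proof -
  interpret S: group "G\<lparr>carrier := S\<rparr>" using subgroup_imp_group[OF assms(1)] .
  have "x [^]\<^bsub>G\<lparr>carrier := S\<rparr>\<^esub> order (G\<lparr>carrier := S\<rparr>) = \<one>"
    using S.pow_order_eq_1 assms(3) by simp
  then show ?thesis using nat_pow_consistent unfolding order_def by simp
qed

lemma subgroup_set_mult_subset:
  assumes "subgroup S G" "A \<subseteq> S" "B \<subseteq> S"
  shows "A <#> B \<subseteq> S"
  using mono_set_mult[OF assms(2,3), of G] subgroup_mult_id[OF assms(1)] by simp

lemma subset_set_mult_left:
  assumes "subgroup B G" "A \<subseteq> carrier G"
  shows "A \<subseteq> A <#> B"
proof
  fix a assume "a \<in> A"
  then show "a \<in> A <#> B"
    using subgroup.one_closed[OF assms(1)] assms(2) unfolding set_mult_def by force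
qed

lemma subset_set_mult_right:
  assumes "subgroup A G" "B \<subseteq> carrier G"
  shows "B \<subseteq> A <#> B"
proof
  fix b assume "b \<in> B"
  then show "b \<in> A <#> B"
    using subgroup.one_closed[OF assms(1)] assms(2) unfolding set_mult_def by force
qed

subsection \<open>Normalizers and centralizers\<close>

lemma normalizer_iff_conj_image:
  assumes "A \<subseteq> carrier G"
  shows "g \<in> normalizer G A \<longleftrightarrow> g \<in> carrier G \<and> (\<lambda>a. g \<otimes> a \<otimes> inv g) ` A = A"
proof -
  have "g <# A #> inv g = (\<lambda>a. g \<otimes> a \<otimes> inv g) ` A" if "g \<in> carrier G"
    unfolding l_coset_def r_coset_def by (auto simp: image_iff)
  moreover have "g \<in> normalizer G A \<longleftrightarrow> g \<in> carrier G \<and> g <# A #> inv g = A"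
    using assms unfolding normalizer_def stabilizer_def by simp
  ultimately show ?thesis by blast
qed

lemma normalizerI_finite:
  assumes "finite A" "A \<subseteq> carrier G" "g \<in> carrier G"
    and "\<And>a. a \<in> A \<Longrightarrow> g \<otimes> a \<otimes> inv g \<in> A"
  shows "g \<in> normalizer G A"
proof -
  have "inj_on (\<lambda>a. g \<otimes> a \<otimes> inv g) A"
    by (rule inj_onI, rule conjugation_is_inj[OF assms(3)]) (use assms(2) in auto)
  moreover have "(\<lambda>a. g \<otimes> a \<otimes> inv g) ` A \<subseteq> A" using assms(4) by (rule image_subsetI)
  ultimately have "(\<lambda>a. g \<otimes> a \<otimes> inv g) ` A = A" using endo_inj_surj[OF assms(1)] by simp
  then show ?thesis using normalizer_iff_conj_image[OF assms(2)] assms(3) by simp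
qed

lemma normalizerD:
  assumes "A \<subseteq> carrier G" "g \<in> normalizer G A" "a \<in> A"
  shows "g \<otimes> a \<otimes> inv g \<in> A"
  using assms normalizer_iff_conj_image by blast

lemma normalizer_inv_conjD:
  assumes "A \<subseteq> carrier G" "g \<in> normalizer G A" "a \<in> A"
  shows "inv g \<otimes> a \<otimes> g \<in> A"
proof -
  have "g \<in> carrier G" using assms(1,2) normalizer_iff_conj_image by blast
  moreover have "inv g \<in> normalizer G A"
    using subgroup.m_inv_closed[OF normalizer_imp_subgroup[OF assms(1)] assms(2)] .
  ultimately show ?thesis using normalizerD[OF assms(1) _ assms(3)] by fastforce
qed

lemma subset_normalizer:
  assumes "subgroup A G"
  shows "A \<subseteq> normalizer G A"
  using subgroup.subset[OF normal_imp_subgroup[OF subgroup_in_normalizer[OF assms]]] by simp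

lemma subgroup_conj_image:
  assumes "subgroup A G" "g \<in> carrier G"
  shows "subgroup ((\<lambda>a. g \<otimes> a \<otimes> inv g) ` A) G"
proof -
  have "g <# A #> inv g = (\<lambda>a. g \<otimes> a \<otimes> inv g) ` A"
    unfolding l_coset_def r_coset_def by (auto simp: image_iff)
  then show ?thesis using subgroup_conjugation_is_surj1[of "inv g" A] assms by simp
qed

lemma card_conj_image:
  assumes "A \<subseteq> carrier G" "g \<in> carrier G"
  shows "card ((\<lambda>a. g \<otimes> a \<otimes> inv g) ` A) = card A"
  by (rule card_image, rule inj_onI, rule conjugation_is_inj[OF assms(2)]) (use assms(1) in auto)

lemma conj_rcos:
  assumes "N \<subseteq> carrier G" "x \<in> normalizer G N" "n \<in> carrier G"
  shows "x <# (N #> n) #> inv x = N #> (x \<otimes> n \<otimes> inv x)"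
proof -
  have x: "x \<in> carrier G" using assms(1,2) normalizer_iff_conj_image by blast
  have "x <# (N #> n) #> inv x = (x <# N #> inv x) #> (x \<otimes> n \<otimes> inv x)"
    using assms(1,3) x
    by (simp add: coset_assoc coset_mult_assoc l_coset_subset_G m_assoc)
  also have "x <# N #> inv x = N"
    using assms(1,2) unfolding normalizer_def stabilizer_def by simp
  finally show ?thesis .
qed

lemma normalizer_inter_subset_normalizer_set_mult:
  assumes "finite (A <#> B)" "A \<subseteq> carrier G" "B \<subseteq> carrier G"
  shows "normalizer G A \<inter> normalizer G B \<subseteq> normalizer G (A <#> B)"
proof
  fix g assume g: "g \<in> normalizer G A \<inter> normalizer G B"
  then have gG: "g \<in> carrier G" using assms(2) normalizer_iff_conj_image by blast
  show "g \<in> normalizer G (A <#> B)"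
  proof (rule normalizerI_finite[OF assms(1) setmult_subset_G[OF assms(2,3)] gG])
    fix x assume "x \<in> A <#> B"
    then obtain a b where ab: "a \<in> A" "b \<in> B" "x = a \<otimes> b" unfolding set_mult_def by auto
    moreover have "a \<in> carrier G" "b \<in> carrier G" using ab(1,2) assms(2,3) by auto
    ultimately have "g \<otimes> x \<otimes> inv g = (g \<otimes> a \<otimes> inv g) \<otimes> (g \<otimes> b \<otimes> inv g)"
      using gG by (simp add: m_assoc)
    moreover have "g \<otimes> a \<otimes> inv g \<in> A" "g \<otimes> b \<otimes> inv g \<in> B"
      using normalizerD assms(2,3) g ab by auto
    ultimately show "g \<otimes> x \<otimes> inv g \<in> A <#> B" unfolding set_mult_def by auto
  qed
qed

lemma subgroup_set_mult_normalizing: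
  assumes "subgroup A G" "subgroup B G" "A \<subseteq> normalizer G B"
  shows "subgroup (A <#> B) G"
proof -
  let ?N = "G\<lparr>carrier := normalizer G B\<rparr>"
  have N: "subgroup (normalizer G B) G"
    using normalizer_imp_subgroup[OF subgroup.subset[OF assms(2)]] .
  have B: "B \<lhd> ?N" using subgroup_in_normalizer[OF assms(2)] .
  have A: "subgroup A ?N" using subgroup_incl[OF assms(1) N assms(3)] .
  have "A <#> B = B <#> A" using commut_normal_subgroup[OF N B A] .
  moreover have "subgroup (B <#> A) ?N" using mult_norm_sub_in_sub[OF B A N] .
  ultimately show ?thesis using incl_subgroup[OF N] by simp
qed

lemma normal_in_subgroup_of_normalizer:
  assumes "subgroup N G" "subgroup S G" "N \<subseteq> S" "S \<subseteq> normalizer G N"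
  shows "N \<lhd> G\<lparr>carrier := S\<rparr>"
proof -
  let ?M = "G\<lparr>carrier := normalizer G N\<rparr>"
  have M: "subgroup (normalizer G N) G"
    using normalizer_imp_subgroup[OF subgroup.subset[OF assms(1)]] .
  interpret M: group ?M using subgroup_imp_group[OF M] .
  have "N \<lhd> ?M\<lparr>carrier := S\<rparr>"
    using M.normal_restrict_supergroup[OF subgroup_incl[OF assms(2) M assms(4)]
        subgroup_in_normalizer[OF assms(1)] assms(3)] .
  then show ?thesis by simp
qed

lemma centralizerD: "c \<in> centralizer G A \<Longrightarrow> a \<in> A \<Longrightarrow> c \<otimes> a = a \<otimes> c"
  unfolding centralizer_def by auto

lemma centralizer_antimono: "B \<subseteq> A \<Longrightarrow> centralizer G A \<subseteq> centralizer G B"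
  unfolding centralizer_def by auto

lemma subgroup_centralizer:
  assumes "A \<subseteq> carrier G"
  shows "subgroup (centralizer G A) G"
proof (rule subgroupI)
  show "centralizer G A \<subseteq> carrier G" unfolding centralizer_def by auto
  have "\<one> \<in> centralizer G A" using assms unfolding centralizer_def by auto
  then show "centralizer G A \<noteq> {}" by blast
next
  fix c d assume c: "c \<in> centralizer G A" and d: "d \<in> centralizer G A"
  then have cd: "c \<in> carrier G" "d \<in> carrier G" unfolding centralizer_def by auto
  show "inv c \<in> centralizer G A" unfolding centralizer_def
  proof (intro CollectI conjI ballI)
    fix a assume a: "a \<in> A"
    then have aG: "a \<in> carrier G" using assms by auto
    have "inv c \<otimes> a = inv c \<otimes> (a \<otimes> c) \<otimes> inv c" using aG cd by (simp add: m_assoc)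
    also have "\<dots> = inv c \<otimes> (c \<otimes> a) \<otimes> inv c" using centralizerD[OF c a] by simp
    also have "\<dots> = a \<otimes> inv c" using aG cd by simp
    finally show "inv c \<otimes> a = a \<otimes> inv c" .
  qed (use cd in simp)
  show "c \<otimes> d \<in> centralizer G A" unfolding centralizer_def
  proof (intro CollectI conjI ballI)
    fix a assume a: "a \<in> A"
    then have aG: "a \<in> carrier G" using assms by auto
    have "c \<otimes> d \<otimes> a = c \<otimes> (a \<otimes> d)" using centralizerD[OF d a] aG cd by (simp add: m_assoc)
    also have "\<dots> = a \<otimes> c \<otimes> d" using centralizerD[OF c a] aG cd by (simp add: m_assoc[symmetric])
    finally show "c \<otimes> d \<otimes> a = a \<otimes> (c \<otimes> d)" using aG cd by (simp add: m_assoc)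
  qed (use cd in simp)
qed

lemma centralizer_subset_normalizer:
  assumes "A \<subseteq> carrier G"
  shows "centralizer G A \<subseteq> normalizer G A"
proof
  fix c assume c: "c \<in> centralizer G A"
  then have cG: "c \<in> carrier G" unfolding centralizer_def by auto
  have "c \<otimes> a \<otimes> inv c = a" if a: "a \<in> A" for a
  proof -
    have "c \<otimes> a \<otimes> inv c = a \<otimes> c \<otimes> inv c" using centralizerD[OF c a] by simp
    also have "\<dots> = a" using a assms cG by (auto simp: m_assoc)
    finally show ?thesis .
  qed
  then have "(\<lambda>a. c \<otimes> a \<otimes> inv c) ` A = A" by simp
  then show "c \<in> normalizer G A" using normalizer_iff_conj_image[OF assms] cG by blast
qed

lemma normalizer_conj_centralizer:
  assumes "A \<subseteq> carrier G" "g \<in> normalizer G A" "c \<in> centralizer G A"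
  shows "g \<otimes> c \<otimes> inv g \<in> centralizer G A"
  unfolding centralizer_def
proof (intro CollectI conjI ballI)
  have gG: "g \<in> carrier G" using assms(1,2) normalizer_iff_conj_image by blast
  have cG: "c \<in> carrier G" using assms(3) unfolding centralizer_def by auto
  show "g \<otimes> c \<otimes> inv g \<in> carrier G" using gG cG by simp
  fix a assume a: "a \<in> A"
  define b where "b = inv g \<otimes> a \<otimes> g"
  have b: "b \<in> A" unfolding b_def using normalizer_inv_conjD[OF assms(1,2) a] .
  have aG: "a \<in> carrier G" and bG: "b \<in> carrier G" using a b assms(1) by auto
  have ab: "a = g \<otimes> b \<otimes> inv g" unfolding b_def using aG gG by (simp add: m_assoc)
  have "g \<otimes> c \<otimes> inv g \<otimes> (g \<otimes> b \<otimes> inv g) = g \<otimes> (c \<otimes> b) \<otimes> inv g"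
    using gG cG bG by (simp add: m_assoc)
  also have "\<dots> = g \<otimes> (b \<otimes> c) \<otimes> inv g" using centralizerD[OF assms(3) b] by simp
  also have "\<dots> = g \<otimes> b \<otimes> inv g \<otimes> (g \<otimes> c \<otimes> inv g)"
    using gG cG bG by (simp add: m_assoc)
  finally show "g \<otimes> c \<otimes> inv g \<otimes> a = a \<otimes> (g \<otimes> c \<otimes> inv g)" using ab by simp
qed

lemma conj_nat_pow_eq:
  assumes "c \<in> carrier G" "x \<in> carrier G" "z \<in> carrier G"
    and "c \<otimes> z = z \<otimes> c" "inv c \<otimes> x \<otimes> c = x \<otimes> z"
  shows "inv (c [^] n) \<otimes> x \<otimes> c [^] n = x \<otimes> z [^] (n::nat)"
proof (induction n)
  case 0
  then show ?case using assms(2) by simp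
next
  case (Suc n)
  have "z \<in> centralizer G {c}" unfolding centralizer_def using assms(3,4) by simp
  then have "z [^] n \<in> centralizer G {c}"
    using subgroup_nat_pow_closed[OF subgroup_centralizer] assms(1) by simp
  then have comm: "z [^] n \<otimes> c = c \<otimes> z [^] n" using centralizerD by blast
  have "inv (c [^] Suc n) \<otimes> x \<otimes> c [^] Suc n = inv c \<otimes> (inv (c [^] n) \<otimes> x \<otimes> c [^] n) \<otimes> c"
    using assms(1,2) by (simp add: inv_mult_group m_assoc)
  also have "\<dots> = inv c \<otimes> (x \<otimes> z [^] n) \<otimes> c" using Suc.IH by simp
  also have "\<dots> = (inv c \<otimes> x \<otimes> c) \<otimes> (inv c \<otimes> z [^] n \<otimes> c)"
    using assms(1-3) by (simp add: m_assoc)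
  also have "inv c \<otimes> z [^] n \<otimes> c = z [^] n" using comm assms(1,3) by (simp add: m_assoc)
  finally show ?case using assms(2,3,5) nat_pow_Suc2[of z n] by (simp add: m_assoc)
qed

subsection \<open>Sylow subgroups and \<open>p\<close>-groups\<close>

lemma coprime_exponent_split:
  fixes N m :: nat
  assumes "subgroup S G" "subgroup T G" "c \<in> T" "c [^] N \<in> S"
    and "c [^] (N * m) = \<one>" "coprime N m" "N \<noteq> 0"
  shows "\<exists>y\<in>T. \<exists>w\<in>S. c = y \<otimes> w \<and> y [^] N = \<one>"
proof -
  obtain u v where "N * u = m * v + gcd N m" using bezout_nat[OF assms(7)] by blast
  then have uv: "N * u = Suc (m * v)" using assms(6) by (simp add: coprime_iff_gcd_eq_1)
  have cG: "c \<in> carrier G" using subgroup.mem_carrier[OF assms(2,3)] .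
  define y where "y = inv (c [^] (m * v))"
  define w where "w = (c [^] N) [^] u"
  have "w = c [^] (N * u)" unfolding w_def using cG by (simp add: nat_pow_pow)
  also have "\<dots> = c [^] (m * v) \<otimes> c" unfolding uv by simp
  finally have "c = y \<otimes> w" unfolding y_def using cG by (simp add: m_assoc[symmetric])
  moreover have "y [^] N = \<one>"
  proof -
    have "(c [^] (m * v)) [^] N = (c [^] (N * m)) [^] v"
      using cG by (simp add: nat_pow_pow mult.commute mult.left_commute)
    then show ?thesis unfolding y_def using cG assms(5) by (simp add: nat_pow_inv)
  qed
  moreover have "y \<in> T" unfolding y_def
    using subgroup.m_inv_closed[OF assms(2) subgroup_nat_pow_closed[OF assms(2,3)]] .
  moreover have "w \<in> S" unfolding w_def using subgroup_nat_pow_closed[OF assms(1,4)] .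
  ultimately show ?thesis by blast
qed

lemma rcosets_translation_action:
  assumes "subgroup P G"
  shows "group_action G (rcosets P) (\<lambda>g. \<lambda>S\<in>rcosets P. S #> inv g)"
proof -
  let ?E = "rcosets P"
  have E_carrier: "S \<subseteq> carrier G" if "S \<in> ?E" for S
    using that subgroup.rcosets_carrier[OF assms is_group] by blast
  have closed: "S #> g \<in> ?E" if S: "S \<in> ?E" and g: "g \<in> carrier G" for S g
  proof -
    obtain a where "a \<in> carrier G" "S = P #> a" using S unfolding RCOSETS_def by auto
    then show ?thesis
      using g subgroup.subset[OF assms] by (simp add: coset_mult_assoc rcosetsI)
  qed
  have comp: "S #> inv h #> inv g = S #> inv (g \<otimes> h)"
    if "S \<in> ?E" "g \<in> carrier G" "h \<in> carrier G" for S g h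
    using that E_carrier by (simp add: coset_mult_assoc inv_mult_group)
  have bij: "(\<lambda>S\<in>?E. S #> inv g) \<in> carrier (BijGroup ?E)" if g: "g \<in> carrier G" for g
  proof -
    have "bij_betw (\<lambda>S. S #> inv g) ?E ?E"
      by (rule bij_betw_byWitness[where f' = "\<lambda>S. S #> g"])
        (use g closed E_carrier in \<open>auto simp: coset_mult_assoc\<close>)
    then show ?thesis unfolding BijGroup_def Bij_def by simp
  qed
  have "(\<lambda>g. \<lambda>S\<in>?E. S #> inv g) \<in> hom G (BijGroup ?E)"
  proof (rule homI)
    fix g h assume gh: "g \<in> carrier G" "h \<in> carrier G"
    have "(\<lambda>S\<in>?E. S #> inv (g \<otimes> h)) = compose ?E (\<lambda>S\<in>?E. S #> inv g) (\<lambda>S\<in>?E. S #> inv h)"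
      unfolding compose_def by (intro restrict_ext) (simp add: closed comp gh)
    then show "(\<lambda>S\<in>?E. S #> inv (g \<otimes> h))
        = (\<lambda>S\<in>?E. S #> inv g) \<otimes>\<^bsub>BijGroup ?E\<^esub> (\<lambda>S\<in>?E. S #> inv h)"
      using bij gh unfolding BijGroup_def by simp
  qed (rule bij)
  then show ?thesis
    unfolding group_action_def group_hom_def group_hom_axioms_def
    using is_group group_BijGroup by blast
qed

lemma sylow_order_split:
  assumes "finite (carrier G)" "Factorial_Ring.prime p" "sylow_subgroup G p P"
  shows "\<exists>m. order G = card P * m \<and> coprime (card P) m"
proof -
  have "order G \<noteq> 0" using assms(1) order_gt_0_iff_finite by simp
  moreover have "\<not> is_unit p" using assms(2) not_prime_unit by blast
  ultimately obtain m where m: "order G = p ^ multiplicity p (order G) * m" "\<not> p dvd m"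
    by (rule multiplicity_decompose')
  have "card P = p ^ multiplicity p (order G)"
    using assms(3) unfolding sylow_subgroup_def order_def by simp
  moreover have "coprime (p ^ multiplicity p (order G)) m"
    using prime_imp_coprime[OF assms(2) m(2)] by simp
  ultimately show ?thesis using m(1) by auto
qed

lemma sylow_not_dvd_subgroup:
  assumes "finite (carrier G)" "Factorial_Ring.prime p" "sylow_subgroup G p P" "subgroup M G"
  shows "\<not> p * card P dvd card M"
proof
  assume dvd_M: "p * card P dvd card M"
  have n0: "order G \<noteq> 0" using assms(1) order_gt_0_iff_finite by simp
  have p: "\<not> is_unit p" using assms(2) not_prime_unit by blast
  have "card M dvd order G" using lagrange[OF assms(4)] by (metis dvd_triv_right)
  moreover have "p * card P = p ^ Suc (multiplicity p (order G))"
    using assms(3) unfolding sylow_subgroup_def order_def by simp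
  ultimately have "p ^ Suc (multiplicity p (order G)) dvd order G"
    using dvd_M dvd_trans by metis
  then show False
    using power_dvd_iff_le_multiplicity[OF n0 p, of "Suc (multiplicity p (order G))"] by simp
qed

end

lemma (in group_action) fixed_point_of_prime_power_order:
  assumes "finite E" "Factorial_Ring.prime p" "order G = p ^ s" "\<not> p dvd card E"
  shows "\<exists>x\<in>E. \<forall>g\<in>carrier G. \<phi> g x = x"
proof (rule ccontr)
  assume no_fixed_point: "\<not> ?thesis"
  have "p dvd card orb" if orb_orbit: "orb \<in> orbits G E \<phi>" for orb
  proof -
    obtain x where x: "x \<in> E" and orb: "orb = orbit G \<phi> x"
      using orb_orbit unfolding orbits_def by auto
    have "card orb dvd p ^ s" using orbit_stabilizer_theorem[OF x] orb assms(3)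
      by (metis dvd_triv_left)
    then obtain i where i: "card orb = p ^ i" using divides_primepow_nat[OF assms(2)] by auto
    obtain g where g: "g \<in> carrier G" "\<phi> g x \<noteq> x" using no_fixed_point x by auto
    have "x \<in> orb" "\<phi> g x \<in> orb" using orbit_refl[OF x] g(1) unfolding orb orbit_def by auto
    then have "card orb \<noteq> 1" using g(2) by (metis card_1_singletonE singletonD)
    then have "i \<noteq> 0" using i by auto
    then show ?thesis using i assms(2) by (simp add: prime_dvd_power_iff)
  qed
  then have "p dvd (\<Sum>orb\<in>orbits G E \<phi>. card orb)" by (simp add: dvd_sum)
  also have "(\<Sum>orb\<in>orbits G E \<phi>. card orb) = card E"
    using disjoint_sum[OF assms(1), of "\<lambda>_. 1::nat"] by simp
  finally show False using assms(4) by simp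
qed

context group
begin

lemma sylow_conj_into:
  assumes fin: "finite (carrier G)" and p: "Factorial_Ring.prime p" and P: "sylow_subgroup G p P"
    and M: "subgroup M G" "P \<subseteq> M" and Z: "subgroup Z G" "Z \<subseteq> M" "card Z = p ^ s"
  shows "\<exists>y\<in>M. \<forall>z\<in>Z. y \<otimes> z \<otimes> inv y \<in> P"
proof -
  let ?M = "G\<lparr>carrier := M\<rparr>"
  let ?E = "rcosets\<^bsub>?M\<^esub> P"
  interpret M: group ?M using subgroup_imp_group[OF M(1)] .
  have P_sub: "subgroup P G" using P unfolding sylow_subgroup_def by simp
  have PM: "subgroup P ?M" using subgroup_incl[OF P_sub M] .
  have ZM: "subgroup Z ?M" using subgroup_incl[OF Z(1) M(1) Z(2)] .
  interpret act: group_action "?M\<lparr>carrier := Z\<rparr>" ?E "\<lambda>g. \<lambda>S\<in>?E. S #>\<^bsub>?M\<^esub> inv\<^bsub>?M\<^esub> g"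
    using group_action.induced_action[OF M.rcosets_translation_action[OF PM] ZM] .
  have "card ?E * card P = card M" using M.lagrange[OF PM] unfolding order_def by simp
  then have "\<not> p dvd card ?E"
    using sylow_not_dvd_subgroup[OF fin p P M(1)] by (metis mult.commute mult_dvd_mono dvd_refl)
  moreover have "finite ?E"
  proof -
    have "finite M" using finite_subset[OF subgroup.subset[OF M(1)] fin] .
    then show ?thesis using finite_subset[OF M.rcosets_subset_PowG[OF PM]] by simp
  qed
  moreover have "order (?M\<lparr>carrier := Z\<rparr>) = p ^ s" using Z(3) unfolding order_def by simp
  ultimately obtain S where S: "S \<in> ?E"
    and fixed: "\<forall>z\<in>Z. (\<lambda>S\<in>?E. S #>\<^bsub>?M\<^esub> inv\<^bsub>?M\<^esub> z) S = S"
    using act.fixed_point_of_prime_power_order[OF _ p] by force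
  obtain y where y: "y \<in> M" "S = P #> y" using S unfolding RCOSETS_def by auto
  have "y \<otimes> z \<otimes> inv y \<in> P" if z: "z \<in> Z" for z
  proof -
    have zi: "inv z \<in> Z" "inv z \<in> M" using subgroup.m_inv_closed[OF Z(1) z] Z(2) by auto
    have yG: "y \<in> carrier G" and zG: "z \<in> carrier G"
      using subgroup.mem_carrier[OF M(1) y(1)] subgroup.mem_carrier[OF Z(1) z] by auto
    have "S #> inv (inv z) = S"
      using fixed zi S m_inv_consistent[OF M(1) zi(2)] by auto
    then have "P #> (y \<otimes> z) = P #> y"
      using y(2) yG zG subgroup.subset[OF P_sub] by (simp add: coset_mult_assoc)
    then show ?thesis using rcos_eq_iff[OF P_sub _ yG] yG zG by simp
  qed
  then show ?thesis using y(1) by blast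
qed

lemma p_subgroup_normalizing_sylow_subset:
  assumes fin: "finite (carrier G)" and p: "Factorial_Ring.prime p" and P: "sylow_subgroup G p P"
    and Z: "subgroup Z G" "card Z = p ^ s" "Z \<subseteq> normalizer G P"
  shows "Z \<subseteq> P"
proof
  have P_sub: "subgroup P G" using P unfolding sylow_subgroup_def by simp
  have PG: "P \<subseteq> carrier G" and ZG: "Z \<subseteq> carrier G"
    using subgroup.subset[OF P_sub] subgroup.subset[OF Z(1)] by auto
  have N: "subgroup (normalizer G P) G" using normalizer_imp_subgroup[OF PG] .
  let ?M = "Z <#> P"
  have M: "subgroup ?M G" using subgroup_set_mult_normalizing[OF Z(1) P_sub Z(3)] .
  have "?M \<subseteq> normalizer G P"
    using subgroup_set_mult_subset[OF N Z(3) subset_normalizer[OF P_sub]] .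
  moreover obtain t where t: "t \<in> ?M" "\<forall>z\<in>Z. t \<otimes> z \<otimes> inv t \<in> P"
    using sylow_conj_into[OF fin p P M subset_set_mult_right[OF Z(1) PG] Z(1)
        subset_set_mult_left[OF P_sub ZG] Z(2)] by blast
  ultimately have tN: "t \<in> normalizer G P" by blast
  fix z assume z: "z \<in> Z"
  have "inv t \<otimes> (t \<otimes> z \<otimes> inv t) \<otimes> t \<in> P" using normalizer_inv_conjD[OF PG tN] t(2) z by blast
  moreover have "t \<in> carrier G" "z \<in> carrier G" using subgroup.mem_carrier[OF N tN] z ZG by auto
  ultimately show "z \<in> P" by (simp add: m_assoc)
qed

lemma p_element_normalizing_sylow_mem:
  assumes fin: "finite (carrier G)" and p: "Factorial_Ring.prime p" and P: "sylow_subgroup G p P"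
    and y: "y \<in> normalizer G P" "y [^] card P = \<one>"
  shows "y \<in> P"
proof -
  have PG: "P \<subseteq> carrier G" using P unfolding sylow_subgroup_def by (simp add: subgroup.subset)
  have N: "subgroup (normalizer G P) G" using normalizer_imp_subgroup[OF PG] .
  have yG: "y \<in> carrier G" using subgroup.mem_carrier[OF N y(1)] .
  have "card (generate G {y}) dvd p ^ multiplicity p (card (carrier G))"
    using P y(2) pow_eq_id[OF yG] generate_pow_card[OF yG] unfolding sylow_subgroup_def by simp
  then obtain s where "card (generate G {y}) = p ^ s" using divides_primepow_nat[OF p] by auto
  moreover have "generate G {y} \<subseteq> normalizer G P"
    using generate_subgroup_incl[OF _ N] y(1) by simp
  ultimately have "generate G {y} \<subseteq> P"
    using p_subgroup_normalizing_sylow_subset[OF fin p P generate_is_subgroup] yG by simp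
  then show ?thesis using generate.incl[of y "{y}" G] by blast
qed

lemma prime_power_order_if_exponent:
  assumes fin: "finite (carrier G)" and p: "Factorial_Ring.prime p"
    and exponent: "\<And>x. x \<in> carrier G \<Longrightarrow> x [^] (p ^ e) = \<one>"
  shows "\<exists>k. order G = p ^ k"
proof (rule ccontr)
  assume not_power: "\<not> ?thesis"
  have n0: "order G \<noteq> 0" using fin order_gt_0_iff_finite by simp
  moreover have "\<not> is_unit p" using p not_prime_unit by blast
  ultimately obtain r where r: "order G = p ^ multiplicity p (order G) * r" "\<not> p dvd r"
    by (rule multiplicity_decompose')
  then have "r \<noteq> 1" using not_power by (metis mult.right_neutral)
  then obtain q where q: "Factorial_Ring.prime q" "q dvd r" using prime_factor_nat by blast
  have "q \<noteq> p" using q(2) r(2) by auto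
  define a where "a = multiplicity q (order G)"
  obtain m where "order G = q ^ a * m"
    using multiplicity_dvd[of q "order G"] unfolding a_def by (rule dvdE)
  then obtain S where S: "subgroup S G" "card S = q ^ a"
    using sylow_thm[OF q(1) is_group _ fin] by blast
  have "q dvd order G" using q(2) r(1) by (metis dvd_mult)
  then have "a > 0" unfolding a_def using prime_multiplicity_gt_zero_iff[OF _ n0] q(1) by simp
  then have "q \<le> card S" using S(2) power_increasing[of 1 a q] prime_gt_0_nat[OF q(1)] by simp
  then have "2 \<le> card S" using prime_ge_2_nat[OF q(1)] by linarith
  have "x = \<one>" if x: "x \<in> S" for x
  proof -
    have xG: "x \<in> carrier G" using subgroup.mem_carrier[OF S(1) x] .
    have "finite S" using finite_subset[OF subgroup.subset[OF S(1)] fin] .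
    then have "ord x dvd q ^ a" using subgroup_pow_card_eq_one[OF S(1) _ x] S(2) pow_eq_id[OF xG]
      by simp
    moreover have "ord x dvd p ^ e" using exponent[OF xG] pow_eq_id[OF xG] by simp
    moreover have "coprime (q ^ a) (p ^ e)" using primes_coprime[OF q(1) p \<open>q \<noteq> p\<close>] by simp
    ultimately have "ord x = 1" by (metis coprime_common_divisor_nat)
    then show ?thesis using ord_eq_1[OF xG] by simp
  qed
  then have "card S \<le> card {\<one>}" by (intro card_mono) auto
  then show False using \<open>2 \<le> card S\<close> by simp
qed

end

subsection \<open>Fixed points of \<open>P\<close> on \<open>N\<^sub>H(Q)/Q C\<^sub>H(Q)\<close>\<close>

locale sylow_normal_product = group G for G (structure) +
  fixes p :: nat and P H Q NHQ CHQ NHP CGP K L :: "'a set"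
  assumes finite_carrier: "finite (carrier G)"
    and prime_p: "Factorial_Ring.prime p"
    and sylow_P: "sylow_subgroup G p P"
    and normal_H: "H \<lhd> G"
    and carrier_eq: "carrier G = P <#> H"
    and Q_def: "Q = P \<inter> H"
    and NHQ_def: "NHQ = normalizer G Q \<inter> H"
    and CHQ_def: "CHQ = centralizer G Q \<inter> H"
    and NHP_def: "NHP = normalizer G P \<inter> H"
    and CGP_def: "CGP = centralizer G P"
    and K_def: "K = Q <#> CHQ"
    and L_def: "L = P <#> CGP"
begin

abbreviation "NHQ_mod_K \<equiv> G\<lparr>carrier := NHQ\<rparr> Mod K"
abbreviation "NP_mod_L \<equiv> G\<lparr>carrier := normalizer G P\<rparr> Mod L"
abbreviation "NHP_cosets \<equiv> (\<lambda>n. K #> n) ` NHP"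

lemma finite_subset_carrier: "A \<subseteq> carrier G \<Longrightarrow> finite A"
  using finite_carrier finite_subset by blast

lemma subgroup_P: "subgroup P G"
  using sylow_P unfolding sylow_subgroup_def by simp

lemma subgroup_H: "subgroup H G"
  using normal_imp_subgroup[OF normal_H] .

lemma subgroup_Q: "subgroup Q G"
  unfolding Q_def using subgroups_Inter_pair[OF subgroup_P subgroup_H] .

lemma P_carrier: "P \<subseteq> carrier G"
  using subgroup.subset[OF subgroup_P] .

lemma Q_carrier: "Q \<subseteq> carrier G"
  using subgroup.subset[OF subgroup_Q] .

lemma subgroup_NP: "subgroup (normalizer G P) G"
  using normalizer_imp_subgroup[OF P_carrier] .

lemma subgroup_NQ: "subgroup (normalizer G Q) G"
  using normalizer_imp_subgroup[OF Q_carrier] .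

lemma subgroup_NHQ: "subgroup NHQ G"
  unfolding NHQ_def using subgroups_Inter_pair[OF subgroup_NQ subgroup_H] .

lemma subgroup_NHP: "subgroup NHP G"
  unfolding NHP_def using subgroups_Inter_pair[OF subgroup_NP subgroup_H] .

lemma subgroup_CHQ: "subgroup CHQ G"
  unfolding CHQ_def using subgroups_Inter_pair[OF subgroup_centralizer[OF Q_carrier] subgroup_H] .

lemma subgroup_CGP: "subgroup CGP G"
  unfolding CGP_def using subgroup_centralizer[OF P_carrier] .

lemma NP_subset_NQ: "normalizer G P \<subseteq> normalizer G Q"
proof
  fix g assume g: "g \<in> normalizer G P"
  then have gG: "g \<in> carrier G" using subgroup.mem_carrier[OF subgroup_NP] by blast
  show "g \<in> normalizer G Q"
  proof (rule normalizerI_finite[OF finite_subset_carrier[OF Q_carrier] Q_carrier gG])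
    fix a assume "a \<in> Q"
    then show "g \<otimes> a \<otimes> inv g \<in> Q"
      using normalizerD[OF P_carrier g] normal.inv_op_closed2[OF normal_H gG] unfolding Q_def
        by auto
  qed
qed

lemma P_subset_NP: "P \<subseteq> normalizer G P"
  using subset_normalizer[OF subgroup_P] .

lemma NHP_subset_NHQ: "NHP \<subseteq> NHQ"
  unfolding NHP_def NHQ_def using NP_subset_NQ by auto

lemma NQ_subset_N_CHQ: "normalizer G Q \<subseteq> normalizer G CHQ"
proof
  fix g assume g: "g \<in> normalizer G Q"
  then have gG: "g \<in> carrier G" using subgroup.mem_carrier[OF subgroup_NQ] by blast
  show "g \<in> normalizer G CHQ"
  proof (rule normalizerI_finite[OF finite_subset_carrier])
    fix c assume "c \<in> CHQ"
    then show "g \<otimes> c \<otimes> inv g \<in> CHQ"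
      using normalizer_conj_centralizer[OF Q_carrier g] normal.inv_op_closed2[OF normal_H gG]
      unfolding CHQ_def by auto
  qed (use gG subgroup.subset[OF subgroup_CHQ] in auto)
qed

lemma NP_subset_N_CGP: "normalizer G P \<subseteq> normalizer G CGP"
proof
  fix g assume g: "g \<in> normalizer G P"
  then have gG: "g \<in> carrier G" using subgroup.mem_carrier[OF subgroup_NP] by blast
  show "g \<in> normalizer G CGP"
    using normalizerI_finite[OF finite_subset_carrier _ gG]
      normalizer_conj_centralizer[OF P_carrier g]
      subgroup.subset[OF subgroup_CGP] unfolding CGP_def by auto
qed

lemma subgroup_K: "subgroup K G"
  unfolding K_def using subgroup_set_mult_normalizing[OF subgroup_Q subgroup_CHQ]
    subset_normalizer[OF subgroup_Q] NQ_subset_N_CHQ by blast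

lemma subgroup_L: "subgroup L G"
  unfolding L_def using subgroup_set_mult_normalizing[OF subgroup_P subgroup_CGP]
    P_subset_NP NP_subset_N_CGP by blast

lemma K_carrier: "K \<subseteq> carrier G"
  using subgroup.subset[OF subgroup_K] .

lemma Q_subset_K: "Q \<subseteq> K"
  unfolding K_def using subset_set_mult_left[OF subgroup_CHQ Q_carrier] .

lemma CHQ_subset_K: "CHQ \<subseteq> K"
  unfolding K_def using subset_set_mult_right[OF subgroup_Q subgroup.subset[OF subgroup_CHQ]] .

lemma P_subset_L: "P \<subseteq> L"
  unfolding L_def using subset_set_mult_left[OF subgroup_CGP P_carrier] .

lemma K_subset_NHQ: "K \<subseteq> NHQ"
proof -
  have "Q \<subseteq> NHQ" using subset_normalizer[OF subgroup_Q] unfolding NHQ_def Q_def by auto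
  moreover have "CHQ \<subseteq> NHQ" using centralizer_subset_normalizer[OF Q_carrier]
    unfolding CHQ_def NHQ_def by auto
  ultimately show ?thesis unfolding K_def using subgroup_set_mult_subset[OF subgroup_NHQ] by blast
qed

lemma L_subset_NP: "L \<subseteq> normalizer G P"
  unfolding L_def CGP_def using subgroup_set_mult_subset[OF subgroup_NP P_subset_NP]
    centralizer_subset_normalizer[OF P_carrier] by blast

lemma NQ_subset_NK: "normalizer G Q \<subseteq> normalizer G K"
  using normalizer_inter_subset_normalizer_set_mult[OF _ Q_carrier subgroup.subset[OF subgroup_CHQ]]
    NQ_subset_N_CHQ finite_subset_carrier K_carrier unfolding K_def by blast

lemma NP_subset_NL: "normalizer G P \<subseteq> normalizer G L"
  using normalizer_inter_subset_normalizer_set_mult[OF _ P_carrier subgroup.subset[OF subgroup_CGP]]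
    NP_subset_N_CGP finite_subset_carrier subgroup.subset[OF subgroup_L] unfolding L_def by blast

lemma normal_K: "K \<lhd> G\<lparr>carrier := NHQ\<rparr>"
  using normal_in_subgroup_of_normalizer[OF subgroup_K subgroup_NHQ K_subset_NHQ]
    NQ_subset_NK unfolding NHQ_def by blast

lemma normal_L: "L \<lhd> G\<lparr>carrier := normalizer G P\<rparr>"
  using normal_in_subgroup_of_normalizer[OF subgroup_L subgroup_NP L_subset_NP NP_subset_NL] .

lemma conj_fixed_rcos_iff:
  assumes n: "n \<in> NHQ"
  shows "K #> n \<in> conj_fixed G P (carrier NHQ_mod_K)
    \<longleftrightarrow> (\<forall>x\<in>P. x \<otimes> n \<otimes> inv x \<otimes> inv n \<in> K)"
proof -
  have nG: "n \<in> carrier G" using n subgroup.mem_carrier[OF subgroup_NHQ] by blast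
  have "x <# (K #> n) #> inv x = K #> n \<longleftrightarrow> x \<otimes> n \<otimes> inv x \<otimes> inv n \<in> K" if x: "x \<in> P" for x
  proof -
    have "x \<in> normalizer G K" using x P_subset_NP NP_subset_NQ NQ_subset_NK by blast
    moreover have "x \<in> carrier G" using x P_carrier by blast
    ultimately show ?thesis
      using conj_rcos[OF K_carrier _ nG] rcos_eq_iff[OF subgroup_K _ nG] nG by simp
  qed
  moreover have "K #> n \<in> carrier NHQ_mod_K"
    using n unfolding carrier_FactGroup by simp
  ultimately show ?thesis unfolding conj_fixed_def by auto
qed

lemma NHP_commutator_mem_K:
  assumes "n \<in> NHP" "x \<in> P"
  shows "x \<otimes> n \<otimes> inv x \<otimes> inv n \<in> K"
proof -
  have n: "n \<in> normalizer G P" "n \<in> H" using assms(1) unfolding NHP_def by auto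
  have nG: "n \<in> carrier G" and xG: "x \<in> carrier G"
    using n(1) assms(2) subgroup.mem_carrier[OF subgroup_NP] P_carrier by auto
  have "x \<otimes> (n \<otimes> inv x \<otimes> inv n) \<in> P"
    using normalizerD[OF P_carrier n(1)] subgroup.m_closed[OF subgroup_P]
      subgroup.m_inv_closed[OF subgroup_P]
      assms(2) by blast
  moreover have "(x \<otimes> n \<otimes> inv x) \<otimes> inv n \<in> H"
    using normal.inv_op_closed2[OF normal_H xG n(2)] subgroup.m_closed[OF subgroup_H]
      subgroup.m_inv_closed[OF subgroup_H n(2)] by blast
  ultimately show ?thesis using Q_subset_K nG xG unfolding Q_def by (auto simp: m_assoc)
qed

lemma subgroup_PK: "subgroup (P <#> K) G"
  using subgroup_set_mult_normalizing[OF subgroup_P subgroup_K]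
    P_subset_NP NP_subset_NQ NQ_subset_NK
  by blast

lemma conj_P_subset_PK:
  assumes n: "n \<in> carrier G" and commutators: "\<forall>x\<in>P. x \<otimes> n \<otimes> inv x \<otimes> inv n \<in> K"
  shows "(\<lambda>a. n \<otimes> a \<otimes> inv n) ` P \<subseteq> P <#> K"
proof
  fix z assume "z \<in> (\<lambda>a. n \<otimes> a \<otimes> inv n) ` P"
  then obtain a where a: "a \<in> P" "z = n \<otimes> a \<otimes> inv n" by blast
  have aG: "a \<in> carrier G" using a(1) P_carrier by blast
  have "inv a \<otimes> n \<otimes> inv (inv a) \<otimes> inv n \<in> K"
    using commutators subgroup.m_inv_closed[OF subgroup_P a(1)] by blast
  moreover have "z = a \<otimes> (inv a \<otimes> n \<otimes> inv (inv a) \<otimes> inv n)"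
    using a(2) aG n by (simp add: m_assoc)
  ultimately show "z \<in> P <#> K" unfolding set_mult_def using a(1) by blast
qed

lemma fixed_rcos_has_NHP_representative:
  assumes n: "n \<in> NHQ" and commutators: "\<forall>x\<in>P. x \<otimes> n \<otimes> inv x \<otimes> inv n \<in> K"
  shows "\<exists>m\<in>NHP. K #> n = K #> m"
proof -
  have nG: "n \<in> carrier G" and nH: "n \<in> H"
    using n subgroup.mem_carrier[OF subgroup_NHQ] unfolding NHQ_def by auto
  let ?Z = "(\<lambda>a. n \<otimes> a \<otimes> inv n) ` P"
  have "subgroup ?Z G" "card ?Z = p ^ multiplicity p (card (carrier G))"
    using subgroup_conj_image[OF subgroup_P nG] card_conj_image[OF P_carrier nG] sylow_P
    unfolding sylow_subgroup_def by auto
  then obtain y where y: "y \<in> P <#> K" "\<forall>z\<in>?Z. y \<otimes> z \<otimes> inv y \<in> P"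
    using sylow_conj_into[OF finite_carrier prime_p sylow_P subgroup_PK
        subset_set_mult_left[OF subgroup_K P_carrier]] conj_P_subset_PK[OF nG commutators] by blast
  then obtain x k where xk: "x \<in> P" "k \<in> K" "y = x \<otimes> k" unfolding set_mult_def by blast
  have xG: "x \<in> carrier G" and kG: "k \<in> carrier G" using xk P_carrier K_carrier by auto
  define m where "m = k \<otimes> n"
  have mG: "m \<in> carrier G" unfolding m_def using kG nG by simp
  have "m \<in> normalizer G P"
  proof (rule normalizerI_finite[OF finite_subset_carrier[OF P_carrier] P_carrier mG])
    fix a assume a: "a \<in> P"
    have aG: "a \<in> carrier G" using a P_carrier by blast
    have "inv x \<otimes> (y \<otimes> (n \<otimes> a \<otimes> inv n) \<otimes> inv y) \<otimes> x \<in> P"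
      using normalizer_inv_conjD[OF P_carrier] P_subset_NP xk(1) y(2) a by blast
    moreover have "inv x \<otimes> (y \<otimes> (n \<otimes> a \<otimes> inv n) \<otimes> inv y) \<otimes> x = m \<otimes> a \<otimes> inv m"
      unfolding xk(3) m_def using xG kG nG aG by (simp add: m_assoc inv_mult_group)
    ultimately show "m \<otimes> a \<otimes> inv m \<in> P" by simp
  qed
  moreover have "m \<in> H"
    unfolding m_def using subgroup.m_closed[OF subgroup_H _ nH] xk(2) K_subset_NHQ unfolding NHQ_def
      by blast
  moreover have "K #> n = K #> m"
    using rcos_eq_iff[OF subgroup_K nG mG] subgroup.m_inv_closed[OF subgroup_K xk(2)] nG kG
    unfolding m_def by (simp add: inv_mult_group m_assoc)
  ultimately show ?thesis unfolding NHP_def by blast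
qed

lemma conj_fixed_eq_NHP_rcos:
  "conj_fixed G P (carrier NHQ_mod_K) = NHP_cosets"
proof
  show "conj_fixed G P (carrier NHQ_mod_K) \<subseteq> NHP_cosets"
  proof
    fix Y assume Y: "Y \<in> conj_fixed G P (carrier NHQ_mod_K)"
    then obtain n where n: "n \<in> NHQ" "Y = K #> n"
      unfolding conj_fixed_def carrier_FactGroup by auto
    then show "Y \<in> NHP_cosets"
      using fixed_rcos_has_NHP_representative conj_fixed_rcos_iff Y by blast
  qed
  show "NHP_cosets \<subseteq> conj_fixed G P (carrier NHQ_mod_K)"
    using conj_fixed_rcos_iff NHP_commutator_mem_K NHP_subset_NHQ by blast
qed

lemma rcos_image_NHP_CHQ: "(\<lambda>n. K #> n) ` (NHP <#> CHQ) = NHP_cosets"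
proof
  show "NHP_cosets \<subseteq> (\<lambda>n. K #> n) ` (NHP <#> CHQ)"
    using subset_set_mult_left[OF subgroup_CHQ subgroup.subset[OF subgroup_NHP]] by blast
  show "(\<lambda>n. K #> n) ` (NHP <#> CHQ) \<subseteq> NHP_cosets"
  proof
    fix Y assume "Y \<in> (\<lambda>n. K #> n) ` (NHP <#> CHQ)"
    then obtain n c where nc: "n \<in> NHP" "c \<in> CHQ" "Y = K #> (n \<otimes> c)" unfolding set_mult_def by auto
    have nG: "n \<in> carrier G" and cG: "c \<in> carrier G"
      using nc subgroup.mem_carrier[OF subgroup_NHP] subgroup.mem_carrier[OF subgroup_CHQ] by auto
    have "n \<in> normalizer G CHQ" using nc(1) NP_subset_NQ NQ_subset_N_CHQ unfolding NHP_def by blast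
    then have "n \<otimes> c \<otimes> inv n \<in> K"
      using normalizerD[OF subgroup.subset[OF subgroup_CHQ] _ nc(2)] CHQ_subset_K by blast
    then have "K #> (n \<otimes> c) = K #> n" using rcos_eq_iff[OF subgroup_K _ nG] nG cG by simp
    then show "Y \<in> NHP_cosets" using nc by blast
  qed
qed

lemma subgroup_NHP_rcos: "subgroup NHP_cosets NHQ_mod_K"
proof -
  interpret NHQ: group "G\<lparr>carrier := NHQ\<rparr>" using subgroup_imp_group[OF subgroup_NHQ] .
  have "group_hom (G\<lparr>carrier := NHQ\<rparr>) NHQ_mod_K (\<lambda>n. K #> n)"
    using normal.r_coset_hom_Mod[OF normal_K] normal.factorgroup_is_group[OF normal_K]
    unfolding group_hom_def group_hom_axioms_def by simp
  then show ?thesis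
    using group_hom.subgroup_img_is_subgroup
      subgroup_incl[OF subgroup_NHP subgroup_NHQ NHP_subset_NHQ]
    by blast
qed

lemma pow_card_centralizes_P:
  assumes c: "c \<in> CHQ" "c \<in> normalizer G P"
  shows "c [^] card P \<in> CGP"
proof -
  have cG: "c \<in> carrier G" and cH: "c \<in> H" and cQ: "c \<in> centralizer G Q"
    using c(1) subgroup.mem_carrier[OF subgroup_CHQ] unfolding CHQ_def by auto
  have "c [^] card P \<otimes> x = x \<otimes> c [^] card P" if x: "x \<in> P" for x
  proof -
    have xG: "x \<in> carrier G" using x P_carrier by blast
    define z where "z = inv x \<otimes> (inv c \<otimes> x \<otimes> c)"
    have "z \<in> P"
      unfolding z_def
        using normalizer_inv_conjD[OF P_carrier c(2) x] subgroup.m_inv_closed[OF subgroup_P x]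
        subgroup.m_closed[OF subgroup_P] by blast
    moreover have "z \<in> H"
    proof -
      have "inv x \<otimes> inv c \<otimes> inv (inv x) \<in> H"
        using normal.inv_op_closed2[OF normal_H inv_closed[OF xG]
            subgroup.m_inv_closed[OF subgroup_H cH]] .
      then have "inv x \<otimes> inv c \<otimes> inv (inv x) \<otimes> c \<in> H" using subgroup.m_closed[OF subgroup_H _ cH]
        by blast
      then show ?thesis unfolding z_def using xG cG by (simp add: m_assoc)
    qed
    ultimately have z: "z \<in> Q" "z \<in> carrier G" unfolding Q_def using P_carrier by auto
    have "c \<otimes> z = z \<otimes> c" using centralizerD[OF cQ z(1)] .
    moreover have "inv c \<otimes> x \<otimes> c = x \<otimes> z" unfolding z_def using xG cG by (simp add: m_assoc)
    ultimately have "inv (c [^] card P) \<otimes> x \<otimes> c [^] card P = x \<otimes> z [^] card P"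
      using conj_nat_pow_eq[OF cG xG z(2)] by blast
    also have "z [^] card P = \<one>"
      using subgroup_pow_card_eq_one[OF subgroup_P finite_subset_carrier[OF P_carrier]] z Q_def
        by auto
    finally have conj: "inv (c [^] card P) \<otimes> x \<otimes> c [^] card P = x" using xG by simp
    have "c [^] card P \<otimes> x = c [^] card P \<otimes> (inv (c [^] card P) \<otimes> x \<otimes> c [^] card P)"
      by (simp only: conj)
    also have "\<dots> = x \<otimes> c [^] card P" using xG cG by (simp add: m_assoc)
    finally show ?thesis .
  qed
  then show ?thesis unfolding CGP_def centralizer_def using cG by auto
qed

lemma CHQ_inter_NP_subset_L: "CHQ \<inter> normalizer G P \<subseteq> L"
proof
  fix c assume c: "c \<in> CHQ \<inter> normalizer G P"
  have cG: "c \<in> carrier G" using c subgroup.mem_carrier[OF subgroup_CHQ] by blast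
  obtain m where m: "order G = card P * m" "coprime (card P) m"
    using sylow_order_split[OF finite_carrier prime_p sylow_P] by blast
  have "card P \<noteq> 0"
    using finite_subset_carrier[OF P_carrier] subgroup.one_closed[OF subgroup_P] by auto
  moreover have "c [^] (card P * m) = \<one>" using pow_order_eq_1[OF cG] m(1) by simp
  ultimately obtain y w where yw: "y \<in> normalizer G P" "w \<in> CGP" "c = y \<otimes> w" "y [^] card P = \<one>"
    using coprime_exponent_split[OF subgroup_CGP subgroup_NP _ pow_card_centralizes_P] c m(2)
      by blast
  have "y \<in> P" using p_element_normalizing_sylow_mem[OF finite_carrier prime_p sylow_P yw(1,4)] .
  then show "c \<in> L" unfolding L_def set_mult_def using yw(2,3) by blast
qed

lemma K_inter_NP_subset_L: "K \<inter> normalizer G P \<subseteq> L"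
proof
  fix k assume k: "k \<in> K \<inter> normalizer G P"
  then obtain q c where qc: "q \<in> Q" "c \<in> CHQ" "k = q \<otimes> c" unfolding K_def set_mult_def by blast
  have qP: "q \<in> P" using qc(1) unfolding Q_def by blast
  have qG: "q \<in> carrier G" and cG: "c \<in> carrier G"
    using qP P_carrier qc(2) subgroup.mem_carrier[OF subgroup_CHQ] by auto
  have "inv q \<otimes> k \<in> normalizer G P"
    using subgroup.m_closed[OF subgroup_NP subgroup.m_inv_closed[OF subgroup_NP]] P_subset_NP qP k
      by blast
  then have "c \<in> normalizer G P" using qc(3) qG cG by (simp add: m_assoc)
  then have "c \<in> L" using CHQ_inter_NP_subset_L qc(2) by blast
  then show "k \<in> L" using subgroup.m_closed[OF subgroup_L] P_subset_L qP qc(3) by blast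
qed

text \<open>The map \<open>K n \<mapsto> L n\<close>, defined without choosing a representative of the coset.\<close>

definition induced_map :: "'a set \<Rightarrow> 'a set"
  where "induced_map Y = L <#> (Y \<inter> normalizer G P)"

lemma induced_map_rcos:
  assumes n: "n \<in> normalizer G P"
  shows "induced_map (K #> n) = L #> n"
proof -
  have nG: "n \<in> carrier G" using n subgroup.mem_carrier[OF subgroup_NP] by blast
  have "(K #> n) \<inter> normalizer G P = (K \<inter> normalizer G P) #> n"
  proof
    show "(K #> n) \<inter> normalizer G P \<subseteq> (K \<inter> normalizer G P) #> n"
    proof
      fix x assume "x \<in> (K #> n) \<inter> normalizer G P"
      then obtain k where k: "k \<in> K" "x = k \<otimes> n" "k \<otimes> n \<in> normalizer G P" unfolding r_coset_def
        by blast
      have "k \<in> carrier G" using k(1) K_carrier by blast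
      then have "k = (k \<otimes> n) \<otimes> inv n" using nG by (simp add: m_assoc)
      then have "k \<in> normalizer G P"
        using subgroup.m_closed[OF subgroup_NP k(3) subgroup.m_inv_closed[OF subgroup_NP n]] by simp
      then show "x \<in> (K \<inter> normalizer G P) #> n" unfolding r_coset_def using k by blast
    qed
    show "(K \<inter> normalizer G P) #> n \<subseteq> (K #> n) \<inter> normalizer G P"
      unfolding r_coset_def using subgroup.m_closed[OF subgroup_NP _ n] by blast
  qed
  then have "induced_map (K #> n) = L <#> ((K \<inter> normalizer G P) #> n)"
    unfolding induced_map_def by simp
  also have "\<dots> = (L <#> (K \<inter> normalizer G P)) #> n"
    by (rule setmult_rcos_assoc[OF subgroup.subset[OF subgroup_L] _ nG]) (use K_carrier in blast)
  also have "L <#> (K \<inter> normalizer G P) = L"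
    using subgroup_set_mult_subset[OF subgroup_L subset_refl K_inter_NP_subset_L]
      subset_set_mult_left[OF subgroups_Inter_pair[OF subgroup_K subgroup_NP]
        subgroup.subset[OF subgroup_L]]
    by (rule equalityI)
  finally show ?thesis .
qed

lemma induced_map_hom:
  "induced_map \<in> hom (NHQ_mod_K\<lparr>carrier := NHP_cosets\<rparr>) NP_mod_L"
proof (rule homI)
  have NHP_NP: "NHP \<subseteq> normalizer G P" unfolding NHP_def by blast
  fix Y assume "Y \<in> carrier (NHQ_mod_K\<lparr>carrier := NHP_cosets\<rparr>)"
  then obtain n where n: "n \<in> NHP" "Y = K #> n" by auto
  then show "induced_map Y \<in> carrier NP_mod_L"
    using induced_map_rcos NHP_NP unfolding carrier_FactGroup by auto
  fix Y' assume "Y' \<in> carrier (NHQ_mod_K\<lparr>carrier := NHP_cosets\<rparr>)"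
  then obtain n' where n': "n' \<in> NHP" "Y' = K #> n'" by auto
  have nN: "n \<in> normalizer G P" "n' \<in> normalizer G P" using n(1) n'(1) NHP_NP by auto
  have "Y <#> Y' = K #> (n \<otimes> n')"
    unfolding n(2) n'(2) using n(1) n'(1) NHP_subset_NHQ
      by (intro rcos_mult_in_subgroup[OF normal_K]) auto
  then have "induced_map (Y <#> Y') = L #> (n \<otimes> n')"
    using induced_map_rcos subgroup.m_closed[OF subgroup_NP nN] by simp
  also have "\<dots> = (L #> n) <#> (L #> n')"
    using rcos_mult_in_subgroup[OF normal_L nN] by simp
  also have "\<dots> = induced_map Y <#> induced_map Y'"
    unfolding n(2) n'(2) using induced_map_rcos nN by simp
  finally show "induced_map (Y \<otimes>\<^bsub>NHQ_mod_K\<lparr>carrier := NHP_cosets\<rparr>\<^esub> Y')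
      = induced_map Y \<otimes>\<^bsub>NP_mod_L\<^esub> induced_map Y'"
    by simp
qed

lemma induced_map_surj:
  "induced_map ` NHP_cosets = carrier NP_mod_L"
proof
  show "induced_map ` NHP_cosets \<subseteq> carrier NP_mod_L"
    using induced_map_rcos unfolding carrier_FactGroup NHP_def by auto
  show "carrier NP_mod_L \<subseteq> induced_map ` NHP_cosets"
  proof
    fix T assume "T \<in> carrier NP_mod_L"
    then obtain g where g: "g \<in> normalizer G P" "T = L #> g" unfolding carrier_FactGroup by auto
    have gG: "g \<in> carrier G" using g(1) subgroup.mem_carrier[OF subgroup_NP] by blast
    then obtain x h where xh: "x \<in> P" "h \<in> H" "g = x \<otimes> h" unfolding carrier_eq set_mult_def by blast
    have xG: "x \<in> carrier G" and hG: "h \<in> carrier G"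
      using xh P_carrier subgroup.mem_carrier[OF subgroup_H] by auto
    have "h = inv x \<otimes> g" using xh(3) xG hG by simp
    then have "h \<in> NHP"
      using subgroup.m_closed[OF subgroup_NP subgroup.m_inv_closed[OF subgroup_NP] g(1)]
        P_subset_NP xh(1,2)
      unfolding NHP_def by auto
    moreover have "L #> g = L #> h"
      using rcos_eq_iff[OF subgroup_L gG hG] xh P_subset_L xG hG by (auto simp: m_assoc)
    ultimately show "T \<in> induced_map ` NHP_cosets"
      using g(2) induced_map_rcos NHP_def by blast
  qed
qed

lemma kernel_induced_map_pow_card:
  assumes Y: "Y \<in> kernel (NHQ_mod_K\<lparr>carrier := NHP_cosets\<rparr>) NP_mod_L induced_map"
  shows "Y [^]\<^bsub>NHQ_mod_K\<^esub> card P = K"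
proof -
  obtain n where n: "n \<in> NHP" "Y = K #> n" "induced_map Y = L" using Y unfolding kernel_def by auto
  have nG: "n \<in> carrier G" and nH: "n \<in> H" and nN: "n \<in> normalizer G P"
    using n(1) subgroup.mem_carrier[OF subgroup_NHP] unfolding NHP_def by auto
  have "n \<in> L" using coset_join1[OF _ nG subgroup_L] induced_map_rcos[OF nN] n by simp
  then obtain x c where xc: "x \<in> P" "c \<in> CGP" "n = x \<otimes> c" unfolding L_def set_mult_def by blast
  have xG: "x \<in> carrier G" and cG: "c \<in> carrier G"
    using xc P_carrier subgroup.mem_carrier[OF subgroup_CGP] by auto
  have "n [^] card P = x [^] card P \<otimes> c [^] card P"
    using pow_mult_distrib[OF _ xG cG] centralizerD[of c P x] xc unfolding CGP_def by simp
  also have "x [^] card P = \<one>"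
    using subgroup_pow_card_eq_one[OF subgroup_P finite_subset_carrier[OF P_carrier] xc(1)] .
  finally have "n [^] card P = c [^] card P" using cG by simp
  moreover have "c [^] card P \<in> centralizer G Q"
    using subgroup_nat_pow_closed[OF subgroup_CGP xc(2)] centralizer_antimono[of Q P]
    unfolding CGP_def Q_def by blast
  moreover have "n [^] card P \<in> H" using subgroup_nat_pow_closed[OF subgroup_H nH] .
  ultimately have "n [^] card P \<in> K" using CHQ_subset_K unfolding CHQ_def by auto
  moreover have "Y [^]\<^bsub>NHQ_mod_K\<^esub> card P = K #> n [^] card P"
    using normal.FactGroup_pow[OF normal_K, of n "card P"] n(1,2) NHP_subset_NHQ
      nat_pow_consistent[of n "card P" NHQ] by auto
  ultimately show ?thesis using coset_join2[OF _ subgroup_K] nG by simp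
qed

lemma kernel_induced_map_prime_power:
  "\<exists>k. card (kernel (NHQ_mod_K\<lparr>carrier := NHP_cosets\<rparr>) NP_mod_L induced_map) = p ^ k"
proof -
  let ?F = "NHQ_mod_K\<lparr>carrier := NHP_cosets\<rparr>"
  let ?ker = "kernel ?F NP_mod_L induced_map"
  interpret Mod_K: group NHQ_mod_K using normal.factorgroup_is_group[OF normal_K] .
  interpret F: group ?F using Mod_K.subgroup_imp_group[OF subgroup_NHP_rcos] .
  interpret induced: group_hom ?F NP_mod_L induced_map
    unfolding group_hom_def group_hom_axioms_def
    using F.is_group normal.factorgroup_is_group[OF normal_L] induced_map_hom by blast
  interpret ker: group "?F\<lparr>carrier := ?ker\<rparr>"
    using F.subgroup_imp_group[OF induced.subgroup_kernel] .
  have "finite (carrier (?F\<lparr>carrier := ?ker\<rparr>))"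
    using finite_subset_carrier[OF subgroup.subset[OF subgroup_NHP]] unfolding kernel_def by auto
  moreover have "Y [^]\<^bsub>?F\<lparr>carrier := ?ker\<rparr>\<^esub> (p ^ multiplicity p (card (carrier G)))
      = \<one>\<^bsub>?F\<lparr>carrier := ?ker\<rparr>\<^esub>"
    if "Y \<in> carrier (?F\<lparr>carrier := ?ker\<rparr>)" for Y
    using kernel_induced_map_pow_card[of Y] that sylow_P unfolding sylow_subgroup_def nat_pow_def
      by simp
  ultimately obtain k where "order (?F\<lparr>carrier := ?ker\<rparr>) = p ^ k"
    using ker.prime_power_order_if_exponent[OF _ prime_p] by blast
  then show ?thesis unfolding order_def by auto
qed

end

theorem lemma2p1:
  fixes G (structure) and p :: nat and P H :: "'a set"
  assumes "group G" and "finite (carrier G)"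
    and "Factorial_Ring.prime p" and "odd p"
    and "sylow_subgroup G p P"
    and "H \<lhd> G"
    and "carrier G = P <#> H"
  defines "Q \<equiv> P \<inter> H"
  defines "NHQ \<equiv> normalizer G Q \<inter> H"
    and "CHQ \<equiv> centralizer G Q \<inter> H"
    and "NHP \<equiv> normalizer G P \<inter> H"
    and "CGP \<equiv> centralizer G P"
  defines "K \<equiv> Q <#> CHQ"
    and "L \<equiv> P <#> CGP"
  defines "Fix \<equiv> conj_fixed G P (carrier (G\<lparr>carrier := NHQ\<rparr> Mod K))"
  shows "subgroup Fix (G\<lparr>carrier := NHQ\<rparr> Mod K)
       \<and> Fix = (\<lambda>n. K #> n) ` (NHP <#> CHQ)
       \<and> (\<exists>\<phi>. \<phi> \<in> hom ((G\<lparr>carrier := NHQ\<rparr> Mod K)\<lparr>carrier := Fix\<rparr>)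
                     (G\<lparr>carrier := normalizer G P\<rparr> Mod L)
             \<and> \<phi> ` Fix = carrier (G\<lparr>carrier := normalizer G P\<rparr> Mod L)
             \<and> (\<forall>n\<in>NHP. \<phi> (K #> n) = L #> n)
             \<and> (\<exists>k. card (kernel ((G\<lparr>carrier := NHQ\<rparr> Mod K)\<lparr>carrier := Fix\<rparr>)
                               (G\<lparr>carrier := normalizer G P\<rparr> Mod L) \<phi>) = p ^ k))"
proof -
  interpret sylow_normal_product G p P H Q NHQ CHQ NHP CGP K L
    by (intro sylow_normal_product.intro sylow_normal_product_axioms.intro)
      (use assms in \<open>simp_all add: Q_def NHQ_def CHQ_def NHP_def CGP_def K_def L_def\<close>)
  have Fix: "Fix = NHP_cosets"
    unfolding Fix_def by (rule conj_fixed_eq_NHP_rcos)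
  have "\<forall>n\<in>NHP. induced_map (K #> n) = L #> n"
    using induced_map_rcos unfolding NHP_def by blast
  then show ?thesis
    unfolding Fix rcos_image_NHP_CHQ
    using subgroup_NHP_rcos induced_map_hom induced_map_surj kernel_induced_map_prime_power by blast
qed

end
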